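(* For any $h,v$ with $hv=n^2$, there is an $[h,v]$-scheme for \textsc{InducedEdgeCount} on $n$-vertex graphs.
   Context: Annotated streaming model (schemes): a space-bounded Verifier reads an input stream $\sigma$; after the stream ends, an all-powerful Prover sends a help message to the Verifier as a stream. A scheme for a function $f$ consists of the Verifier's randomized streaming algorithm, the honest Prover's help function, and the Verifier's output procedure, outputting a value in $\mathrm{range}(f)\cup\{\bot\}$ ($\bot$ = reject), with perfect completeness (honest help makes the Verifier output $f(\sigma)$ with probability 1) and soundness error at most $1/3$ (for every $\sigma$ and every help message, the probability of outputting a value outside $\{f(\sigma),\bot\}$ is at most $1/3$). An $[h,v]$-scheme uses $\tilde{O}(h)$ bits of help and $\tilde{O}(v)$ bits of Verifier space, where $\tilde{O}$ hides factors polynomial in $\log n$. \textsc{InducedEdgeCount}: the input stream consists first of the edges of a graph $G=(V,E)$ with $V=[n]$, followed by a stream of vertex subsets $U_1,\dots,U_\ell\subseteq V$ (for some $\ell\in\mathbb{N}$): the vertices of $U_1$ in arbitrary order, then a delimiter, then the vertices of $U_2$ in arbitrary order, and so on. The sets need not be disjoint. The desired output is $\sum_{i=1}^{\ell}|E(G[U_i])|$, the total number of edges of the induced subgraphs $G[U_1],\dots,G[U_\ell]$. *)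

theory Defs
  imports "HOL-Probability.Probability"
begin

datatype tok = Edge nat nat | Vert nat | Delim

definition valid_edges :: "nat \<Rightarrow> (nat \<times> nat) list \<Rightarrow> bool" where
  "valid_edges n es \<longleftrightarrow>
     (\<forall>(u,w)\<in>set es. u \<noteq> w \<and> u < n \<and> w < n) \<and>
     distinct (map (\<lambda>(u,w). {u,w}) es)"

definition edge_set :: "(nat \<times> nat) list \<Rightarrow> nat set set" where
  "edge_set es = (\<lambda>(u,w). {u,w}) ` set es"

definition valid_sets :: "nat \<Rightarrow> nat list list \<Rightarrow> bool" where
  "valid_sets n Us \<longleftrightarrow> (\<forall>U\<in>set Us. distinct U \<and> (\<forall>x\<in>set U. x < n))"

fun sets_stream :: "nat list list \<Rightarrow> tok list" where
  "sets_stream [] = []"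
| "sets_stream [U] = map Vert U"
| "sets_stream (U # Us) = map Vert U @ [Delim] @ sets_stream Us"

definition iec_stream :: "(nat \<times> nat) list \<Rightarrow> nat list list \<Rightarrow> tok list" where
  "iec_stream es Us =
     map (\<lambda>(u,w). Edge u w) es @ sets_stream Us"

definition iec_value :: "(nat \<times> nat) list \<Rightarrow> nat list list \<Rightarrow> nat" where
  "iec_value es Us = (\<Sum>U\<leftarrow>Us. card {e \<in> edge_set es. e \<subseteq> set U})"

text \<open>It reads the input stream (tokens), then the help stream (bits), with fresh
  randomness allowed in every step, and finally outputs a value or None (= reject).\<close>
record verifier =
  v_init :: "bool list pmf"
  v_step :: "tok \<Rightarrow> bool list \<Rightarrow> bool list pmf"
  v_hstep :: "bool \<Rightarrow> bool list \<Rightarrow> bool list pmf"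
  v_out :: "bool list \<Rightarrow> nat option"

fun run_pmf :: "('a \<Rightarrow> bool list \<Rightarrow> bool list pmf) \<Rightarrow> 'a list \<Rightarrow> bool list \<Rightarrow> bool list pmf" where
  "run_pmf f [] s = return_pmf s"
| "run_pmf f (x # xs) s = bind_pmf (f x s) (run_pmf f xs)"

definition v_result :: "verifier \<Rightarrow> tok list \<Rightarrow> bool list \<Rightarrow> nat option pmf" where
  "v_result V \<sigma> H =
     map_pmf (v_out V)
       (bind_pmf (v_init V) (\<lambda>s0. bind_pmf (run_pmf (v_step V) \<sigma> s0) (run_pmf (v_hstep V) H)))"

definition space_bounded :: "verifier \<Rightarrow> real \<Rightarrow> bool" where
  "space_bounded V s \<longleftrightarrow>
     (\<forall>x\<in>set_pmf (v_init V). real (length x) \<le> s) \<and>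
     (\<forall>t st. \<forall>x\<in>set_pmf (v_step V t st). real (length x) \<le> s) \<and>
     (\<forall>b st. \<forall>x\<in>set_pmf (v_hstep V b st). real (length x) \<le> s)"

text \<open>A scheme for InducedEdgeCount on n-vertex graphs (with at most L vertex
  subsets), with help length at most hb and verifier space at most sb:
  perfect completeness and soundness error at most 1/3.\<close>
definition iec_scheme ::
  "nat \<Rightarrow> nat \<Rightarrow> real \<Rightarrow> real \<Rightarrow> verifier \<Rightarrow> (tok list \<Rightarrow> bool list) \<Rightarrow> bool" where
  "iec_scheme n L hb sb V P \<longleftrightarrow>
     space_bounded V sb \<and>
     (\<forall>es Us. valid_edges n es \<longrightarrow> valid_sets n Us \<longrightarrow> length Us \<le> L \<longrightarrow>
        (let \<sigma> = iec_stream es Us; f = iec_value es Us in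
          real (length (P \<sigma>)) \<le> hb \<and>
          measure_pmf.prob (v_result V \<sigma> (P \<sigma>)) {Some f} = 1 \<and>
          (\<forall>H. measure_pmf.prob (v_result V \<sigma> H) {r. r \<noteq> Some f \<and> r \<noteq> None} \<le> 1/3)))"

end

theory Submission
  imports Defs "HOL-Computational_Algebra.Polynomial" "HOL-Computational_Algebra.Primes"
begin

(* Split the vertices into b \<approx> sqrt v classes by their residue modulo b; the quotients are
   below a = n div b + 1, so a\<^sup>2 = O(h). For a random r modulo a prime p the verifier keeps a
   b \<times> b array summing r ^ e(u, w) over the edges with classes (i, j), and, for each set U, row and
   column sums of powers of r over the vertices of U in each class, whose products it adds to a
   second b \<times> b array. The inner product of the two arrays is F(r) for a polynomial F of degree
   below 4a\<^sup>2 that counts the quadruples (edge (u, w), set U, x \<in> U, y \<in> U) with x, y in the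
   classes of u, w; the exponents encode the quotients so that the coefficient at one fixed
   position counts only those with x = u and y = w, which is the answer. The prover sends the
   coefficients of F, O(log n) bits each; the verifier checks them against F(r) and outputs the
   coefficient at that position. A false answer makes the claimed and the true polynomial
   differ modulo p, so they agree at fewer than 4a\<^sup>2 \<le> p/3 points r. A prime p with O(log n)
   bits exists by Chebyshev's argument. *)

section \<open>A prime between \<open>M\<close> and \<open>2 M\<^sup>2\<close>\<close>

lemma multiplicity_eq_card_prime_powers_dvd:
  fixes q k :: nat
  assumes q: "prime q" and k: "0 < k" "k < q ^ Suc K"
  shows "multiplicity q k = card {i \<in> {1..K}. q ^ i dvd k}"
proof -
  have dvd_iff: "q ^ i dvd k \<longleftrightarrow> i \<le> multiplicity q k" for i
    using k q by (intro power_dvd_iff_le_multiplicity) (auto simp: not_prime_unit)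
  have "\<not> q ^ Suc K dvd k"
    using k by (auto dest: dvd_imp_le)
  then have "{i \<in> {1..K}. q ^ i dvd k} = {1..multiplicity q k}"
    using dvd_iff[of "Suc K"] by (auto simp: dvd_iff)
  then show ?thesis
    by simp
qed

lemma multiplicity_fact:
  fixes q :: nat
  assumes q: "prime q" and n: "n < q ^ Suc K"
  shows "multiplicity q (fact n :: nat) = (\<Sum>i=1..K. n div q ^ i)"
  using n
proof (induction n)
  case (Suc n)
  have q_pow_pos: "0 < q ^ i" for i
    using q prime_gt_0_nat by simp
  have "multiplicity q (fact (Suc n) :: nat)
      = multiplicity q (Suc n) + multiplicity q (fact n :: nat)"
    unfolding fact_Suc of_nat_id using q by (intro prime_elem_multiplicity_mult_distrib) auto
  also have "multiplicity q (Suc n) = (\<Sum>i=1..K. if q ^ i dvd Suc n then 1 else 0)"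
    using Suc.prems q by (simp add: multiplicity_eq_card_prime_powers_dvd sum.If_cases Int_def)
  also have "multiplicity q (fact n :: nat) = (\<Sum>i=1..K. n div q ^ i)"
    using Suc by simp
  also have "(\<Sum>i=1..K. if q ^ i dvd Suc n then 1 else 0) + (\<Sum>i=1..K. n div q ^ i)
      = (\<Sum>i=1..K. Suc n div q ^ i)"
    unfolding sum.distrib[symmetric] using q_pow_pos
    by (intro sum.cong refl) (auto simp: div_Suc dvd_eq_mod_eq_0)
  finally show ?case .
qed simp

lemma prime_power_multiplicity_central_binomial_le:
  fixes q m :: nat
  assumes q: "prime q" and m: "0 < m"
  shows "q ^ multiplicity q (2 * m choose m) \<le> 2 * m"
proof (rule ccontr)
  define v where "v = multiplicity q (2 * m choose m)"
  assume "\<not> q ^ v \<le> 2 * m"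
  then have big: "2 * m < q ^ v"
    by (simp add: v_def)
  have q2: "2 \<le> q"
    using q prime_ge_2_nat by blast
  have n_lt: "k < q ^ Suc (2 * m)" if "k \<le> 2 * m" for k
    using that q2 less_exp[of "Suc (2 * m)"] power_mono[of 2 q "Suc (2 * m)"] by linarith
  have "(fact (2 * m) :: nat) = fact m * fact m * (2 * m choose m)"
    using binomial_fact_lemma[of m "2 * m"] by simp
  then have "multiplicity q (fact (2 * m) :: nat)
      = multiplicity q (fact m :: nat) + multiplicity q (fact m :: nat) + v"
    using q by (simp add: prime_elem_multiplicity_mult_distrib v_def)
  then have sum_eq: "2 * (\<Sum>i=1..2*m. m div q ^ i) + v = (\<Sum>i=1..2*m. 2 * m div q ^ i)"
    using multiplicity_fact[OF q n_lt, of "2 * m"] multiplicity_fact[OF q n_lt, of m] by simp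
  txt \<open>Each summand of \<open>v\<close> is 0 or 1, and it vanishes once \<open>q ^ i > 2 * m\<close>, in particular
    for \<open>i \<ge> v\<close>.\<close>
  have term_le: "2 * m div q ^ i \<le> 2 * (m div q ^ i) + (if i < v then 1 else 0)" for i
  proof -
    have "2 * (m mod q ^ i) < 2 * q ^ i"
      using q2 by simp
    then have "2 * m div q ^ i \<le> 2 * (m div q ^ i) + 1"
      using div_mult1_eq[of 2 m "q ^ i"] less_mult_imp_div_less[of "2 * (m mod q ^ i)" 2 "q ^ i"]
      by simp
    moreover have "2 * m div q ^ i = 0" if "v \<le> i"
      using big power_increasing[OF that, of q] q2 by (simp add: div_eq_0_iff order_less_le_trans)
    ultimately show ?thesis
      by (cases "i < v") auto
  qed
  have "(\<Sum>i=1..2*m. 2 * m div q ^ i)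
      \<le> (\<Sum>i=1..2*m. 2 * (m div q ^ i)) + (\<Sum>i=1..2*m. if i < v then 1 else 0)"
    unfolding sum.distrib[symmetric] by (intro sum_mono term_le)
  then have "v \<le> card {i \<in> {1..2*m}. i < v}"
    using sum_eq by (simp add: sum.If_cases Int_def sum_distrib_left)
  also have "\<dots> \<le> card {1..<v}"
    by (intro card_mono) auto
  finally show False
    using big m by (cases v) auto
qed

lemma double_square_less_power_two: "7 \<le> M \<Longrightarrow> 2 * M ^ 2 < (2::nat) ^ M"
proof (induction M rule: dec_induct)
  case (step M)
  have "2 * Suc M ^ 2 = 2 * M ^ 2 + 4 * M + 2"
    by (simp add: power2_eq_square)
  also have "\<dots> \<le> 2 * (2 * M ^ 2)"
  proof -
    have "7 * M \<le> M * M"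
      using step(1) by simp
    then show ?thesis
      using step(1) unfolding power2_eq_square by linarith
  qed
  finally show ?case
    using step by simp
qed simp

text \<open>Chebyshev's argument: otherwise \<open>2m choose m \<ge> 2 ^ m\<close> with \<open>m = M\<^sup>2\<close>, all of whose prime
  factors are at most \<open>M\<close> and whose prime power factors are at most \<open>2m\<close>, would be at most
  \<open>(2m) ^ M\<close>.\<close>
lemma exists_prime_between_square:
  fixes M :: nat
  assumes M: "7 \<le> M"
  shows "\<exists>p. prime p \<and> M < p \<and> p \<le> 2 * M ^ 2"
proof (rule ccontr)
  assume no_prime: "\<nexists>p. prime p \<and> M < p \<and> p \<le> 2 * M ^ 2"
  define m where "m = M ^ 2"
  define C where "C = 2 * m choose m"
  have m: "0 < m"
    using M by (simp add: m_def)
  have "prime_factors C \<subseteq> {2..M}"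
  proof
    fix q assume q: "q \<in> prime_factors C"
    have "C dvd fact (2 * m)"
      using binomial_fact_lemma[of m "2 * m"] unfolding C_def
      by (metis dvd_triv_right le_add2 mult_2)
    then have "q \<le> 2 * m"
      using q by (metis in_prime_factors_iff dvd_trans prime_dvd_fact_iff)
    moreover have "prime q"
      using q by auto
    ultimately have "q \<le> M"
      using no_prime unfolding m_def by (meson not_le)
    then show "q \<in> {2..M}"
      using \<open>prime q\<close> prime_ge_2_nat by simp
  qed
  then have "card (prime_factors C) \<le> card {2..M}"
    by (intro card_mono) auto
  then have card_factors: "card (prime_factors C) \<le> M"
    by simp
  have "C = (\<Prod>q\<in>prime_factors C. q ^ multiplicity q C)"
    by (simp add: C_def prod_prime_factors)
  also have "\<dots> \<le> (\<Prod>q\<in>prime_factors C. 2 * m)"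
    using m by (intro prod_mono) (auto simp: C_def prime_power_multiplicity_central_binomial_le
        in_prime_factors_imp_prime)
  also have "\<dots> \<le> (2 * m) ^ M"
    unfolding prod_constant using card_factors m by (intro power_increasing) auto
  also have "\<dots> < (2 ^ M) ^ M"
    using double_square_less_power_two[OF M] M unfolding m_def by (intro power_strict_mono) auto
  also have "\<dots> = 2 ^ m"
    by (simp add: m_def power2_eq_square power_mult)
  finally have "C < 2 ^ m" .
  moreover have "(2::real) ^ m \<le> real C"
    using binomial_ge_n_over_k_pow_k[of m "2 * m", where 'a = real] m by (simp add: C_def)
  ultimately show False
    by (metis of_nat_le_iff of_nat_numeral of_nat_power not_le)
qed

section \<open>Polynomials and sums\<close>

lemma roots_mod_prime_synthetic_div:
  fixes p r0 :: int and q :: "int poly"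
  assumes p: "prime p" and r0: "r0 \<in> {0..<p}" "p dvd poly q r0"
  shows "{r \<in> {0..<p}. p dvd poly q r} \<subseteq> insert r0 {r \<in> {0..<p}. p dvd poly (synthetic_div q r0) r}"
proof
  fix r assume r: "r \<in> {r \<in> {0..<p}. p dvd poly q r}"
  have "poly q r = (r - r0) * poly (synthetic_div q r0) r + poly q r0"
    by (subst synthetic_div_correct'[where p = q and c = r0, symmetric]) (simp add: algebra_simps)
  then have "p dvd (r - r0) * poly (synthetic_div q r0) r"
    using r r0 dvd_diff[of p "poly q r" "poly q r0"] by simp
  then have "p dvd r - r0 \<or> p dvd poly (synthetic_div q r0) r"
    using p by (simp add: prime_dvd_mult_iff)
  moreover have "r = r0" if "p dvd r - r0"
  proof -
    have "r mod p = r0 mod p"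
      using that by (simp add: mod_eq_dvd_iff)
    then show ?thesis
      using r r0 by simp
  qed
  ultimately show "r \<in> insert r0 {r \<in> {0..<p}. p dvd poly (synthetic_div q r0) r}"
    using r by auto
qed

lemma card_roots_mod_prime_le_degree:
  fixes p :: int and q :: "int poly"
  assumes p: "prime p" and q: "\<not> [:p:] dvd q"
  shows "card {r \<in> {0..<p}. p dvd poly q r} \<le> degree q"
  using q
proof (induction "degree q" arbitrary: q rule: less_induct)
  case less
  let ?roots = "\<lambda>q. {r \<in> {0..<p}. p dvd poly q r}"
  show ?case
  proof (cases "?roots q = {}")
    case False
    then obtain r0 where r0: "r0 \<in> {0..<p}" "p dvd poly q r0"
      by auto
    define q' where "q' = synthetic_div q r0"
    have q_eq: "q = [:-r0, 1:] * q' + [:poly q r0:]"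
      unfolding q'_def by (rule synthetic_div_correct'[symmetric])
    have q': "\<not> [:p:] dvd q'"
    proof
      assume "[:p:] dvd q'"
      then have "[:p:] dvd [:-r0, 1:] * q' + [:poly q r0:]"
        using r0 by (intro dvd_add dvd_mult) simp_all
      with less.prems show False
        using q_eq by simp
    qed
    then have "degree q \<noteq> 0"
      using synthetic_div_eq_0_iff[of q r0] by (auto simp: q'_def)
    then have deg: "degree q = Suc (degree q')"
      by (simp add: q'_def degree_synthetic_div)
    have fin: "finite (?roots q')"
      by (rule finite_subset[of _ "{0..<p}"]) auto
    have "card (?roots q) \<le> card (insert r0 (?roots q'))"
      using roots_mod_prime_synthetic_div[OF p r0] fin by (intro card_mono) (auto simp: q'_def)
    also have "\<dots> \<le> Suc (card (?roots q'))"
      using fin by (simp add: card_insert_if)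
    also have "card (?roots q') \<le> degree q'"
      using less.hyps deg q' by simp
    finally show ?thesis
      using deg by simp
  qed (simp only: card.empty)
qed

lemma card_agreements_mod_prime:
  fixes c c' :: "nat \<Rightarrow> nat"
  assumes p: "prime p" and k0: "k0 < D" and differ: "c k0 mod p \<noteq> c' k0 mod p"
  shows "card {r \<in> {..<p}. (\<Sum>k<D. c k * r ^ k) mod p = (\<Sum>k<D. c' k * r ^ k) mod p} \<le> D - 1"
    (is "card ?agree \<le> _")
proof -
  define Q :: "int poly" where "Q = (\<Sum>k<D. monom (int (c k) - int (c' k)) k)"
  have coeff_Q: "coeff Q k = (if k < D then int (c k) - int (c' k) else 0)" for k
    by (simp add: Q_def coeff_sum)
  have "\<not> int p dvd coeff Q k0"
    using differ k0 by (simp add: coeff_Q mod_eq_dvd_iff[symmetric] flip: of_nat_mod)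
  then have "\<not> [:int p:] dvd Q"
    by (auto simp: const_poly_dvd_iff)
  then have roots: "card {x \<in> {0..<int p}. int p dvd poly Q x} \<le> degree Q"
    using p by (intro card_roots_mod_prime_le_degree) auto
  have "degree Q \<le> D - 1"
    by (rule degree_le) (auto simp: coeff_Q)
  have "int ` ?agree \<subseteq> {x \<in> {0..<int p}. int p dvd poly Q x}"
  proof
    fix x assume "x \<in> int ` ?agree"
    then obtain r where r: "x = int r" "r < p"
      and "(\<Sum>k<D. c k * r ^ k) mod p = (\<Sum>k<D. c' k * r ^ k) mod p"
      by auto
    then have "int (\<Sum>k<D. c k * r ^ k) mod int p = int (\<Sum>k<D. c' k * r ^ k) mod int p"
      by (metis of_nat_mod)
    moreover have "poly Q (int r) = int (\<Sum>k<D. c k * r ^ k) - int (\<Sum>k<D. c' k * r ^ k)"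
      by (simp add: Q_def poly_sum poly_monom sum_subtractf left_diff_distrib)
    ultimately have "int p dvd poly Q (int r)"
      by (simp add: mod_eq_dvd_iff)
    then show "x \<in> {x \<in> {0..<int p}. int p dvd poly Q x}"
      using r by simp
  qed
  moreover have "finite {x \<in> {0..<int p}. int p dvd poly Q x}"
    by (rule finite_subset[of _ "{0..<int p}"]) auto
  ultimately have "card (int ` ?agree) \<le> card {x \<in> {0..<int p}. int p dvd poly Q x}"
    by (intro card_mono)
  then show ?thesis
    using roots \<open>degree Q \<le> D - 1\<close> by (simp add: card_image)
qed

lemma poly_eq_sum_lessThan:
  fixes q :: "'a :: comm_semiring_1 poly"
  assumes "\<And>k. n \<le> k \<Longrightarrow> coeff q k = 0"
  shows "poly q x = (\<Sum>k<n. coeff q k * x ^ k)"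
proof -
  have "q = (\<Sum>k<n. monom (coeff q k) k)"
    using assms by (intro poly_eqI) (auto simp: coeff_sum not_less)
  then have "poly q x = poly (\<Sum>k<n. monom (coeff q k) k) x"
    by (rule arg_cong)
  also have "\<dots> = (\<Sum>k<n. coeff q k * x ^ k)"
    by (simp add: poly_sum poly_monom)
  finally show ?thesis .
qed

lemma coeff_sum_list: "coeff (\<Sum>x\<leftarrow>xs. f x) k = (\<Sum>x\<leftarrow>xs. coeff (f x) k)"
  by (induction xs) simp_all

lemma poly_sum_list_map: "poly (\<Sum>x\<leftarrow>xs. f x) y = (\<Sum>x\<leftarrow>xs. poly (f x) y)"
  by (induction xs) simp_all

lemma sum_list_swap:
  "(\<Sum>x\<leftarrow>xs. \<Sum>y\<leftarrow>ys. f x y) = (\<Sum>y\<leftarrow>ys. \<Sum>x\<leftarrow>xs. (f x y :: 'a :: comm_monoid_add))"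
  by (induction xs) (simp_all add: sum_list_addf)

lemma sum_list_le_length_mult:
  fixes c :: nat
  shows "(\<And>x. x \<in> set xs \<Longrightarrow> f x \<le> c) \<Longrightarrow> (\<Sum>x\<leftarrow>xs. f x) \<le> length xs * c"
  by (induction xs) (simp_all add: add_mono)

lemma sum_sum_list_swap:
  "(\<Sum>i\<in>I. \<Sum>x\<leftarrow>xs. f i x) = (\<Sum>x\<leftarrow>xs. \<Sum>i\<in>I. (f i x :: 'a :: comm_monoid_add))"
  by (induction xs) (simp_all add: sum.distrib)

lemma sum_delta_pair:
  fixes M :: "nat \<Rightarrow> nat \<Rightarrow> 'a :: comm_monoid_add"
  assumes "i0 < b" "j0 < b"
  shows "(\<Sum>i<b. \<Sum>j<b. if i0 = i \<and> j0 = j then M i j else 0) = M i0 j0"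
proof -
  have "(\<Sum>i<b. \<Sum>j<b. if i0 = i \<and> j0 = j then M i j else 0)
      = (\<Sum>i<b. if i0 = i then \<Sum>j<b. if j0 = j then M i j else 0 else 0)"
    by (intro sum.cong) auto
  then show ?thesis
    using assms by simp
qed

lemma sum_lessThan_mult:
  fixes n k :: nat
  shows "(\<Sum>m<n * k. f m) = (\<Sum>i<n. \<Sum>j<k. (f (i * k + j) :: 'a :: comm_monoid_add))"
proof (induction n)
  case (Suc n)
  have "(\<Sum>m<Suc n * k. f m) = (\<Sum>m<n * k. f m) + (\<Sum>m=n * k..<k + n * k. f m)"
    by (simp add: atLeast0LessThan[symmetric] sum.atLeastLessThan_concat add.commute)
  also have "(\<Sum>m=n * k..<k + n * k. f m) = (\<Sum>j<k. f (n * k + j))"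
    using sum.shift_bounds_nat_ivl[of f 0 "n * k" k] by (simp add: atLeast0LessThan add.commute)
  finally show ?case
    using Suc by simp
qed simp

lemma sum_mod_cong:
  fixes f g :: "'a \<Rightarrow> nat"
  assumes "\<And>i. i \<in> A \<Longrightarrow> f i mod m = g i mod m"
  shows "sum f A mod m = sum g A mod m"
  by (metis (mono_tags, lifting) assms mod_sum_eq sum.cong)

lemma sum_bits_eq_mod: "(\<Sum>j<W. if bit (c :: nat) j then 2 ^ j else 0) = c mod 2 ^ W"
proof -
  have "(\<Sum>j<W. if bit c j then 2 ^ j else 0) = (\<Sum>j<W. of_bool (bit c j) * (2::nat) ^ j)"
    by (intro sum.cong) auto
  also have "\<dots> = take_bit W c"
    by (simp add: horner_sum_bit_eq_take_bit[symmetric] horner_sum_eq_sum atLeast0LessThan)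
  finally show ?thesis
    by (simp add: take_bit_eq_mod)
qed

lemma sum_bits_less: "(\<Sum>j<W. if P j then 2 ^ j else 0) < (2::nat) ^ W"
proof -
  have "(\<Sum>j<W. if P j then 2 ^ j else 0) \<le> (\<Sum>j<W. (2::nat) ^ j)"
    by (intro sum_mono) auto
  also have "\<dots> < 2 ^ W"
    using sum_power2[of W] by (simp add: atLeast0LessThan)
  finally show ?thesis .
qed

lemma mult_add_eq_mult_add_iff:
  fixes i j i' j' c :: nat
  assumes "j < c" "j' < c"
  shows "i * c + j = i' * c + j' \<longleftrightarrow> i = i' \<and> j = j'"
proof
  assume eq: "i * c + j = i' * c + j'"
  show "i = i' \<and> j = j'"
    using arg_cong[OF eq, of "\<lambda>x. x mod c"] arg_cong[OF eq, of "\<lambda>x. x div c"] assms by simp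
qed simp

lemma double_le_power_two: "2 * y \<le> (2::nat) ^ y"
proof (induction y)
  case (Suc y)
  then show ?case
    by (cases y) simp_all
qed simp

section \<open>Finite-state verifiers\<close>

lemma run_pmf_return:
  "run_pmf (\<lambda>x s. return_pmf (f x s)) xs s = return_pmf (foldl (\<lambda>s x. f x s) s xs)"
  by (induction xs arbitrary: s) (simp_all add: bind_return_pmf)

lemma foldl_encoded:
  assumes inj: "\<And>s. s \<in> S \<Longrightarrow> dec (enc s) = s" and closed: "\<And>x s. s \<in> S \<Longrightarrow> f x s \<in> S"
  shows "s \<in> S \<Longrightarrow> foldl (\<lambda>bs x. enc (f x (dec bs))) (enc s) xs = enc (foldl (\<lambda>s x. f x s) s xs)"
  by (induction xs arbitrary: s) (simp_all add: inj closed)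

text \<open>The states are encoded injectively by bit strings of length \<open>K\<close>; states outside \<open>S\<close>
  get the code of a fixed state of \<open>S\<close>, so that every memory content has length \<open>K\<close>.\<close>
lemma finite_state_verifier:
  fixes S :: "'s set" and init :: "'s pmf" and step :: "tok \<Rightarrow> 's \<Rightarrow> 's"
    and help_step :: "bool \<Rightarrow> 's \<Rightarrow> 's" and out :: "'s \<Rightarrow> nat option"
  assumes S: "finite S" "card S \<le> 2 ^ K" and init: "set_pmf init \<subseteq> S"
    and step: "\<And>t s. s \<in> S \<Longrightarrow> step t s \<in> S"
    and help_step: "\<And>c s. s \<in> S \<Longrightarrow> help_step c s \<in> S"
  obtains V where "space_bounded V (real K)"
    and "\<And>\<sigma> H. v_result V \<sigma> H =
      map_pmf (\<lambda>s. out (foldl (\<lambda>s c. help_step c s) (foldl (\<lambda>s t. step t s) s \<sigma>) H)) init"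
proof -
  define T where "T = {xs :: bool list. length xs = K}"
  have "finite T" "card T = 2 ^ K"
    unfolding T_def using finite_lists_length_eq[of "UNIV :: bool set" K]
      card_lists_length_eq[of "UNIV :: bool set" K] by simp_all
  then obtain enc where enc: "enc ` S \<subseteq> T" "inj_on enc S"
    using card_le_inj[OF S(1), of T] S(2) by auto
  obtain s0 where s0: "s0 \<in> S"
    using init set_pmf_not_empty[of init] by blast
  define enc' where "enc' s = enc (if s \<in> S then s else s0)" for s
  define dec where "dec = inv_into S enc"
  have len: "length (enc' s) = K" for s
    using enc(1) s0 by (auto simp: enc'_def T_def)
  have dec: "dec (enc' s) = s" if "s \<in> S" for s
    using that enc(2) by (simp add: enc'_def dec_def)
  define V where "V = \<lparr>v_init = map_pmf enc' init,
    v_step = \<lambda>t bs. return_pmf (enc' (step t (dec bs))),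
    v_hstep = \<lambda>c bs. return_pmf (enc' (help_step c (dec bs))),
    v_out = \<lambda>bs. out (dec bs)\<rparr>"
  have "space_bounded V (real K)"
    by (simp add: space_bounded_def V_def len)
  moreover have "v_result V \<sigma> H =
      map_pmf (\<lambda>s. out (foldl (\<lambda>s c. help_step c s) (foldl (\<lambda>s t. step t s) s \<sigma>) H)) init" for \<sigma> H
  proof -
    have stream_S: "foldl (\<lambda>s t. step t s) s \<sigma> \<in> S" if "s \<in> S" for s
      using that by (induction \<sigma> arbitrary: s) (simp_all add: step)
    have help_S: "foldl (\<lambda>s c. help_step c s) s H \<in> S" if "s \<in> S" for s
      using that by (induction H arbitrary: s) (simp_all add: help_step)
    show ?thesis
      unfolding v_result_def V_def
      using init stream_S help_S
      by (auto simp: map_pmf_def bind_assoc_pmf bind_return_pmf run_pmf_return dec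
          foldl_encoded[of S dec enc', OF dec] step help_step intro!: bind_pmf_cong)
  qed
  ultimately show ?thesis
    using that by blast
qed

lemma prob_map_pmf_of_set:
  assumes "finite A" "A \<noteq> {}"
  shows "measure_pmf.prob (map_pmf f (pmf_of_set A)) X = card {x \<in> A. f x \<in> X} / card A"
  using assms by (simp add: measure_pmf_of_set Int_def)

lemma iec_scheme_mono:
  assumes "iec_scheme n N hb sb V P" "hb \<le> hb'" "sb \<le> sb'"
  shows "iec_scheme n N hb' sb' V P"
  using assms unfolding iec_scheme_def space_bounded_def Let_def by (meson order_trans)

section \<open>Input streams\<close>

fun stream_edges :: "tok list \<Rightarrow> (nat \<times> nat) list" where
  "stream_edges [] = []"
| "stream_edges (Edge u w # \<sigma>) = (u, w) # stream_edges \<sigma>"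
| "stream_edges (Vert _ # \<sigma>) = stream_edges \<sigma>"
| "stream_edges (Delim # \<sigma>) = stream_edges \<sigma>"

fun stream_sets :: "tok list \<Rightarrow> nat list list" where
  "stream_sets [] = [[]]"
| "stream_sets (Edge _ _ # \<sigma>) = stream_sets \<sigma>"
| "stream_sets (Vert x # \<sigma>) = (x # hd (stream_sets \<sigma>)) # tl (stream_sets \<sigma>)"
| "stream_sets (Delim # \<sigma>) = [] # stream_sets \<sigma>"

lemma stream_edges_sets_stream: "stream_edges (sets_stream Us) = []"
proof -
  have "stream_edges (map Vert U @ \<sigma>) = stream_edges \<sigma>" for U \<sigma>
    by (induction U) auto
  from this[of _ "[]"] this show ?thesis
    by (induction Us rule: sets_stream.induct) simp_all
qed

lemma stream_edges_iec_stream: "stream_edges (iec_stream es Us) = es"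
  unfolding iec_stream_def
  by (induction es) (auto simp: stream_edges_sets_stream)

lemma stream_sets_not_Nil: "stream_sets \<sigma> \<noteq> []"
  by (induction \<sigma> rule: stream_sets.induct) simp_all

lemma stream_sets_map_Vert:
  "stream_sets (map Vert U @ \<sigma>) = (U @ hd (stream_sets \<sigma>)) # tl (stream_sets \<sigma>)"
  by (induction U) (simp_all add: stream_sets_not_Nil)

text \<open>The empty family and the family consisting of one empty set have the same stream.\<close>
lemma stream_sets_iec_stream:
  "stream_sets (iec_stream es Us) = (if Us = [] then [[]] else Us)"
proof -
  have "stream_sets (map (\<lambda>(u, w). Edge u w) es @ \<sigma>) = stream_sets \<sigma>" for \<sigma>
    by (induction es) auto
  moreover have "stream_sets (sets_stream Us) = (if Us = [] then [[]] else Us)"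
    by (induction Us rule: sets_stream.induct)
      (simp_all add: stream_sets_map_Vert[where \<sigma> = "[]", simplified] stream_sets_map_Vert)
  ultimately show ?thesis
    by (simp add: iec_stream_def)
qed

lemma valid_edgesD:
  assumes "valid_edges n es" "(u, w) \<in> set es"
  shows "u < n" "w < n"
  using assms by (auto simp: valid_edges_def)

lemma valid_setsD:
  assumes "valid_sets n Us" "U \<in> set Us"
  shows "distinct U" "x \<in> set U \<Longrightarrow> x < n"
  using assms by (auto simp: valid_sets_def)

lemma valid_edges_length_le: "valid_edges n es \<Longrightarrow> length es \<le> n * n"
proof -
  assume es: "valid_edges n es"
  then have "distinct es"
    by (simp add: valid_edges_def distinct_map)
  moreover have "set es \<subseteq> {..<n} \<times> {..<n}"
    using es by (auto simp: valid_edges_def)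
  ultimately show ?thesis
    by (metis card_cartesian_product card_lessThan card_mono distinct_card finite_SigmaI
        finite_lessThan)
qed

lemma valid_sets_length_le: "valid_sets n Us \<Longrightarrow> U \<in> set Us \<Longrightarrow> length U \<le> n"
  by (metis valid_sets_def card_lessThan card_mono distinct_card finite_lessThan lessThan_iff
      subsetI)

lemma sum_list_edges_eq_card:
  assumes "valid_edges n es"
  shows "(\<Sum>(u, w)\<leftarrow>es. if u \<in> S \<and> w \<in> S then 1 else 0) = card {e \<in> edge_set es. e \<subseteq> S}"
proof -
  have "(\<Sum>(u, w)\<leftarrow>es. if u \<in> S \<and> w \<in> S then 1 else 0)
      = (\<Sum>e\<leftarrow>map (\<lambda>(u, w). {u, w}) es. if e \<subseteq> S then 1 else (0::nat))"
    by (simp add: split_def comp_def)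
  also have "\<dots> = (\<Sum>e\<in>edge_set es. if e \<subseteq> S then 1 else 0)"
    using assms unfolding edge_set_def valid_edges_def
    by (simp only: sum_list_distinct_conv_sum_set set_map)
  finally show ?thesis
    by (simp add: sum.If_cases Int_def edge_set_def)
qed

section \<open>The fingerprint polynomial\<close>

text \<open>Vertex \<open>x < n\<close> is split into its class \<open>x mod b\<close> and its digit \<open>x div b < a\<close>.
  The exponent of the product of an edge term and a row and a column term has the base-\<open>2a\<close>
  digits \<open>u div b + (a - 1 - x div b)\<close> and \<open>w div b + (a - 1 - y div b)\<close>; for vertices of the
  same classes it hits \<open>target\<close> exactly when \<open>x = u\<close> and \<open>y = w\<close>.\<close>
locale vertex_classes =
  fixes n b :: nat
  assumes b_pos: "0 < b"
begin

definition a :: nat where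
  "a = n div b + 1"

definition edge_exp :: "nat \<Rightarrow> nat \<Rightarrow> nat" where
  "edge_exp u w = u div b * (2 * a) + w div b"

definition row_exp :: "nat \<Rightarrow> nat" where
  "row_exp x = (a - 1 - x div b) * (2 * a)"

definition col_exp :: "nat \<Rightarrow> nat" where
  "col_exp y = a - 1 - y div b"

definition target :: nat where
  "target = (a - 1) * (2 * a) + (a - 1)"

definition D :: nat where
  "D = 4 * a * a"

definition fingerprint :: "(nat \<times> nat) list \<Rightarrow> nat list list \<Rightarrow> nat poly" where
  "fingerprint es Us = (\<Sum>(u, w)\<leftarrow>es. \<Sum>U\<leftarrow>Us. \<Sum>x\<leftarrow>U. \<Sum>y\<leftarrow>U.
     if x mod b = u mod b \<and> y mod b = w mod b
     then monom 1 (edge_exp u w + row_exp x + col_exp y) else 0)"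

lemma digit_less: "x < n \<Longrightarrow> x div b < a"
  by (simp add: a_def div_le_mono less_Suc_eq_le)

lemma exp_sum_eq:
  assumes "x < n" "y < n"
  shows "edge_exp u w + row_exp x + col_exp y
    = (u div b + (a - 1 - x div b)) * (2 * a) + (w div b + (a - 1 - y div b))"
  by (simp add: edge_exp_def row_exp_def col_exp_def algebra_simps)

lemma exp_sum_less:
  assumes "u < n" "w < n" "x < n" "y < n"
  shows "edge_exp u w + row_exp x + col_exp y < D"
proof -
  have "u div b + (a - 1 - x div b) \<le> 2 * a - 1" "w div b + (a - 1 - y div b) < 2 * a"
    using digit_less assms by fastforce+
  then have "edge_exp u w + row_exp x + col_exp y < (2 * a - 1) * (2 * a) + 2 * a"
    unfolding exp_sum_eq[OF assms(3,4)] by (intro add_le_less_mono mult_le_mono1)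
  also have "\<dots> = D"
    using digit_less assms by (cases a) (auto simp: D_def algebra_simps)
  finally show ?thesis .
qed

lemma exp_sum_eq_target_iff:
  assumes "u < n" "w < n" "x < n" "y < n" "x mod b = u mod b" "y mod b = w mod b"
  shows "edge_exp u w + row_exp x + col_exp y = target \<longleftrightarrow> x = u \<and> y = w"
proof -
  have digits: "u div b < a" "w div b < a" "x div b < a" "y div b < a"
    using digit_less assms by auto
  then have "edge_exp u w + row_exp x + col_exp y = target
      \<longleftrightarrow> u div b + (a - 1 - x div b) = a - 1 \<and> w div b + (a - 1 - y div b) = a - 1"
    unfolding exp_sum_eq[OF assms(3,4)] target_def by (intro mult_add_eq_mult_add_iff) auto
  also have "\<dots> \<longleftrightarrow> x div b = u div b \<and> y div b = w div b"
    using digits by auto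
  also have "\<dots> \<longleftrightarrow> x = u \<and> y = w"
    using assms(5,6) by (metis div_mult_mod_eq)
  finally show ?thesis .
qed

lemma target_less_D: "target < D"
proof -
  obtain a' where "a = Suc a'"
    by (simp add: a_def)
  then show ?thesis
    by (simp add: target_def D_def algebra_simps)
qed

lemma D_le:
  assumes "0 < n"
  shows "D \<le> 16 * (n * n)"
proof -
  have "n div b \<le> n"
    by simp
  then have "a \<le> 2 * n"
    using assms unfolding a_def by linarith
  then have "a * a \<le> (2 * n) * (2 * n)"
    using mult_le_mono by blast
  then show ?thesis
    unfolding D_def by linarith
qed

lemma coeff_fingerprint:
  "coeff (fingerprint es Us) k = (\<Sum>(u, w)\<leftarrow>es. \<Sum>U\<leftarrow>Us. \<Sum>x\<leftarrow>U. \<Sum>y\<leftarrow>U.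
     if x mod b = u mod b \<and> y mod b = w mod b \<and> edge_exp u w + row_exp x + col_exp y = k
     then 1 else 0)"
  by (auto simp: fingerprint_def coeff_sum_list split_def if_distrib[of "\<lambda>p. coeff p k"]
      intro!: arg_cong[where f = sum_list] map_cong)

lemma coeff_fingerprint_target:
  assumes es: "valid_edges n es" and Us: "valid_sets n Us"
  shows "coeff (fingerprint es Us) target = iec_value es Us"
proof -
  have "coeff (fingerprint es Us) target
      = (\<Sum>(u, w)\<leftarrow>es. \<Sum>U\<leftarrow>Us. \<Sum>x\<leftarrow>U. if x = u then \<Sum>y\<leftarrow>U. if y = w then 1 else 0 else 0)"
    unfolding coeff_fingerprint using valid_edgesD[OF es] valid_setsD[OF Us]
    by (auto simp: exp_sum_eq_target_iff intro!: arg_cong[where f = sum_list] map_cong)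
  also have "\<dots> = (\<Sum>(u, w)\<leftarrow>es. \<Sum>U\<leftarrow>Us. if u \<in> set U \<and> w \<in> set U then 1 else 0)"
    using valid_setsD(1)[OF Us]
    by (auto simp: sum_list_distinct_conv_sum_set intro!: arg_cong[where f = sum_list] map_cong)
  also have "\<dots> = iec_value es Us"
    unfolding iec_value_def case_prod_beta
    by (subst sum_list_swap) (simp add: sum_list_edges_eq_card[OF es, unfolded case_prod_beta])
  finally show ?thesis .
qed

lemma coeff_fingerprint_eq_0:
  assumes es: "valid_edges n es" and Us: "valid_sets n Us" and k: "D \<le> k"
  shows "coeff (fingerprint es Us) k = 0"
proof -
  have "edge_exp u w + row_exp x + col_exp y \<noteq> k"
    if "(u, w) \<in> set es" "U \<in> set Us" "x \<in> set U" "y \<in> set U" for u w U x y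
    using exp_sum_less[OF valid_edgesD[OF es that(1)] valid_setsD(2)[OF Us that(2,3)]
        valid_setsD(2)[OF Us that(2,4)]] k by linarith
  then show ?thesis
    unfolding coeff_fingerprint by auto
qed

lemma poly_fingerprint_eq_sum:
  assumes "valid_edges n es" "valid_sets n Us"
  shows "poly (fingerprint es Us) r = (\<Sum>k<D. coeff (fingerprint es Us) k * r ^ k)"
  using coeff_fingerprint_eq_0[OF assms] by (intro poly_eq_sum_lessThan)

lemma coeff_fingerprint_le:
  assumes es: "valid_edges n es" and Us: "valid_sets n Us"
  shows "coeff (fingerprint es Us) k \<le> length Us * n ^ 4"
proof -
  have pairs_le: "(\<Sum>x\<leftarrow>U. \<Sum>y\<leftarrow>U. f x y) \<le> n * n"
    if "U \<in> set Us" "\<And>x y. f x y \<le> (1::nat)" for U f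
  proof -
    have "(\<Sum>x\<leftarrow>U. \<Sum>y\<leftarrow>U. f x y) \<le> length U * (length U * 1)"
      using that(2) by (intro sum_list_le_length_mult) auto
    also have "\<dots> \<le> n * n"
      using valid_sets_length_le[OF Us that(1)] by (simp add: mult_le_mono)
    finally show ?thesis .
  qed
  have "coeff (fingerprint es Us) k \<le> length es * (length Us * (n * n))"
    unfolding coeff_fingerprint split_def by (intro sum_list_le_length_mult pairs_le) auto
  also have "\<dots> \<le> n * n * (length Us * (n * n))"
    using valid_edges_length_le[OF es] by simp
  finally show ?thesis
    by (simp add: power4_eq_xxxx mult_ac)
qed

lemma fingerprint_stream_decoded:
  "fingerprint (stream_edges (iec_stream es Us)) (stream_sets (iec_stream es Us))
    = fingerprint es Us"
  by (simp add: stream_edges_iec_stream stream_sets_iec_stream fingerprint_def)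

definition edge_sketch :: "nat \<Rightarrow> (nat \<times> nat) list \<Rightarrow> nat \<times> nat \<Rightarrow> nat" where
  "edge_sketch r es =
     (\<lambda>(i, j). \<Sum>(u, w)\<leftarrow>es. if u mod b = i \<and> w mod b = j then r ^ edge_exp u w else 0)"

definition row_sketch :: "nat \<Rightarrow> nat list \<Rightarrow> nat \<Rightarrow> nat" where
  "row_sketch r U i = (\<Sum>x\<leftarrow>U. if x mod b = i then r ^ row_exp x else 0)"

definition col_sketch :: "nat \<Rightarrow> nat list \<Rightarrow> nat \<Rightarrow> nat" where
  "col_sketch r U j = (\<Sum>y\<leftarrow>U. if y mod b = j then r ^ col_exp y else 0)"

definition sets_sketch :: "nat \<Rightarrow> nat list list \<Rightarrow> nat \<times> nat \<Rightarrow> nat" where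
  "sets_sketch r Us = (\<lambda>(i, j). \<Sum>U\<leftarrow>Us. row_sketch r U i * col_sketch r U j)"

lemma sets_sketch_Cons:
  "sets_sketch r (U # Us) (i, j) = row_sketch r U i * col_sketch r U j + sets_sketch r Us (i, j)"
  by (simp add: sets_sketch_def)

lemma poly_fingerprint:
  "poly (fingerprint es Us) r = (\<Sum>i<b. \<Sum>j<b. edge_sketch r es (i, j) * sets_sketch r Us (i, j))"
proof -
  let ?S = "sets_sketch r Us"
  have "(\<Sum>i<b. \<Sum>j<b. edge_sketch r es (i, j) * ?S (i, j))
      = (\<Sum>i<b. \<Sum>j<b. \<Sum>(u, w)\<leftarrow>es.
          if u mod b = i \<and> w mod b = j then r ^ edge_exp u w * ?S (i, j) else 0)"
    unfolding edge_sketch_def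
    by (simp add: sum_list_mult_const[symmetric] split_def if_distrib[of "\<lambda>x. x * _"] cong: if_cong)
  also have "\<dots> = (\<Sum>(u, w)\<leftarrow>es. \<Sum>i<b. \<Sum>j<b.
          if u mod b = i \<and> w mod b = j then r ^ edge_exp u w * ?S (i, j) else 0)"
    by (simp add: sum_sum_list_swap split_def)
  also have "\<dots> = (\<Sum>(u, w)\<leftarrow>es. r ^ edge_exp u w * ?S (u mod b, w mod b))"
    using b_pos by (simp add: sum_delta_pair split_def)
  also have "\<dots> = poly (fingerprint es Us) r"
    unfolding fingerprint_def sets_sketch_def row_sketch_def col_sketch_def split_def
    by (simp only: sum_list_mult_const[symmetric])
      (simp add: poly_sum_list_map sum_list_const_mult[symmetric] poly_monom power_add
        if_distrib[of "\<lambda>p. poly p r"] if_distrib[of "\<lambda>x. x * _"] if_distrib[of "\<lambda>x. _ * x"]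
        if_if_eq_conj conj_comms mult_ac cong: if_cong)
  finally show ?thesis ..
qed

end

section \<open>The scheme\<close>

record sketch =
  rnd :: nat
  edge_fp :: "nat \<times> nat \<Rightarrow> nat"
  row_fp :: "nat \<Rightarrow> nat"
  col_fp :: "nat \<Rightarrow> nat"
  sets_fp :: "nat \<times> nat \<Rightarrow> nat"

text \<open>The verifier picks \<open>r < p\<close> at random and maintains, modulo \<open>p\<close>, the sketches of
  \<^locale>\<open>vertex_classes\<close> evaluated at \<open>r\<close>: \<open>edge_fp\<close> for the edges, \<open>row_fp\<close> and \<open>col_fp\<close>
  for the current vertex set, and \<open>sets_fp\<close> for the completed ones. The help is the list of
  the \<open>D\<close> coefficients of the fingerprint polynomial, \<open>W\<close> bits each; the verifier evaluates it
  at \<open>r\<close>, compares with its own value, and outputs coefficient \<open>target\<close>.\<close>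
locale iec_protocol = vertex_classes +
  fixes p W :: nat
  assumes prime_p: "prime p"
begin

definition L :: nat where
  "L = D * W"

text \<open>One \<open>W\<close>-bit word for \<open>r\<close>, \<open>2b + 2b\<^sup>2\<close> for the sketches and three for the help state.\<close>
definition memory_bits :: nat where
  "memory_bits = W * (4 + 2 * b + 2 * (b * b))"

definition add_mod :: "('k \<Rightarrow> nat) \<Rightarrow> 'k \<Rightarrow> nat \<Rightarrow> 'k \<Rightarrow> nat" where
  "add_mod f k c = f(k := (f k + c) mod p)"

definition flushed_sets_fp :: "sketch \<Rightarrow> nat \<times> nat \<Rightarrow> nat" where
  "flushed_sets_fp s =
     (\<lambda>(i, j)\<in>{..<b} \<times> {..<b}. (sets_fp s (i, j) + row_fp s i * col_fp s j) mod p)"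

definition sketch_step :: "tok \<Rightarrow> sketch \<Rightarrow> sketch" where
  "sketch_step t s = (case t of
      Edge u w \<Rightarrow> s\<lparr>edge_fp := add_mod (edge_fp s) (u mod b, w mod b) (rnd s ^ edge_exp u w)\<rparr>
    | Vert x \<Rightarrow> s\<lparr>row_fp := add_mod (row_fp s) (x mod b) (rnd s ^ row_exp x),
                 col_fp := add_mod (col_fp s) (x mod b) (rnd s ^ col_exp x)\<rparr>
    | Delim \<Rightarrow> s\<lparr>sets_fp := flushed_sets_fp s, row_fp := (\<lambda>_\<in>{..<b}. 0), col_fp := (\<lambda>_\<in>{..<b}. 0)\<rparr>)"

definition sketch_fold :: "tok list \<Rightarrow> sketch \<Rightarrow> sketch" where
  "sketch_fold \<sigma> s = foldl (\<lambda>s t. sketch_step t s) s \<sigma>"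

definition initial_sketch :: "nat \<Rightarrow> sketch" where
  "initial_sketch r = \<lparr>rnd = r, edge_fp = (\<lambda>_\<in>{..<b} \<times> {..<b}. 0), row_fp = (\<lambda>_\<in>{..<b}. 0),
     col_fp = (\<lambda>_\<in>{..<b}. 0), sets_fp = (\<lambda>_\<in>{..<b} \<times> {..<b}. 0)\<rparr>"

definition check :: "sketch \<Rightarrow> nat" where
  "check s = (\<Sum>i<b. \<Sum>j<b. edge_fp s (i, j) * flushed_sets_fp s (i, j)) mod p"

text \<open>The help state: number of bits read (capped at \<open>L + 1\<close>), the help polynomial evaluated
  at \<open>r\<close> modulo \<open>p\<close>, and coefficient \<open>target\<close> of the help.\<close>
definition help_step :: "nat \<Rightarrow> bool \<Rightarrow> nat \<times> nat \<times> nat \<Rightarrow> nat \<times> nat \<times> nat" where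
  "help_step r c = (\<lambda>(m, val, ans). (min (Suc m) (Suc L),
     if c \<and> m < L then (val + 2 ^ (m mod W) * r ^ (m div W)) mod p else val,
     if c \<and> m < L \<and> m div W = target then (ans + 2 ^ (m mod W)) mod 2 ^ W else ans))"

definition help_fold :: "nat \<Rightarrow> bool list \<Rightarrow> nat \<times> nat \<times> nat" where
  "help_fold r H = foldl (\<lambda>h c. help_step r c h) (0, 0, 0) H"

text \<open>Reducing the claimed answer modulo \<open>p\<close> turns every wrong answer into a wrong coefficient
  modulo \<open>p\<close>.\<close>
definition verdict :: "sketch \<Rightarrow> nat \<times> nat \<times> nat \<Rightarrow> nat option" where
  "verdict s = (\<lambda>(m, val, ans). if m = L \<and> val = check s then Some (ans mod p) else None)"

definition outcome :: "nat \<Rightarrow> tok list \<Rightarrow> bool list \<Rightarrow> nat option" where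
  "outcome r \<sigma> H = verdict (sketch_fold \<sigma> (initial_sketch r)) (help_fold r H)"

definition help_bits :: "(nat \<Rightarrow> nat) \<Rightarrow> bool list" where
  "help_bits c = map (\<lambda>m. bit (c (m div W)) (m mod W)) [0..<L]"

definition chunk :: "bool list \<Rightarrow> nat \<Rightarrow> nat" where
  "chunk H k = (\<Sum>j<W. if H ! (k * W + j) then 2 ^ j else 0)"

lemma p_pos: "0 < p"
  using prime_p prime_gt_0_nat by blast

lemma rnd_initial_sketch [simp]: "rnd (initial_sketch r) = r"
  by (simp add: initial_sketch_def)

lemma sketch_fold_Nil [simp]: "sketch_fold [] s = s"
  by (simp add: sketch_fold_def)

lemma sketch_fold_Cons [simp]: "sketch_fold (t # \<sigma>) s = sketch_fold \<sigma> (sketch_step t s)"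
  by (simp add: sketch_fold_def)

lemma sketch_fold_append [simp]: "sketch_fold (\<sigma> @ \<tau>) s = sketch_fold \<tau> (sketch_fold \<sigma> s)"
  by (simp add: sketch_fold_def)

lemma rnd_sketch_fold: "rnd (sketch_fold \<sigma> s) = rnd s"
  unfolding sketch_fold_def
  by (induction \<sigma> arbitrary: s) (auto simp: sketch_step_def split: tok.split)

lemma foldl_add_mod:
  "foldl (\<lambda>f x. add_mod f (key x) (val x)) f xs k mod p
    = (f k + (\<Sum>x\<leftarrow>xs. if key x = k then val x else 0)) mod p"
  by (induction xs arbitrary: f) (auto simp: add_mod_def mod_add_left_eq add.assoc)

lemma sketch_fold_edges:
  "sketch_fold (map (\<lambda>(u, w). Edge u w) es) s = s\<lparr>edge_fp :=
     foldl (\<lambda>f (u, w). add_mod f (u mod b, w mod b) (rnd s ^ edge_exp u w)) (edge_fp s) es\<rparr>"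
  unfolding sketch_fold_def
  by (induction es arbitrary: s) (auto simp: sketch_step_def)

lemma sketch_fold_verts:
  "sketch_fold (map Vert U) s = s\<lparr>
     row_fp := foldl (\<lambda>f x. add_mod f (x mod b) (rnd s ^ row_exp x)) (row_fp s) U,
     col_fp := foldl (\<lambda>f x. add_mod f (x mod b) (rnd s ^ col_exp x)) (col_fp s) U\<rparr>"
  unfolding sketch_fold_def
  by (induction U arbitrary: s) (auto simp: sketch_step_def)

lemma edge_fp_sketch_fold_edges:
  "edge_fp (sketch_fold (map (\<lambda>(u, w). Edge u w) es) s) (i, j) mod p
    = (edge_fp s (i, j) + edge_sketch (rnd s) es (i, j)) mod p"
  unfolding sketch_fold_edges
  using foldl_add_mod[of "\<lambda>e. (fst e mod b, snd e mod b)" "\<lambda>e. rnd s ^ edge_exp (fst e) (snd e)"]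
  by (simp add: edge_sketch_def split_def)

lemma flushed_sets_fp_verts:
  assumes "i < b" "j < b" "row_fp s i = 0" "col_fp s j = 0"
  shows "flushed_sets_fp (sketch_fold (map Vert U) s) (i, j)
    = (sets_fp s (i, j) + row_sketch (rnd s) U i * col_sketch (rnd s) U j) mod p"
proof -
  let ?s' = "sketch_fold (map Vert U) s"
  have row: "row_fp ?s' i mod p = row_sketch (rnd s) U i mod p"
    using foldl_add_mod[of "\<lambda>x. x mod b" "\<lambda>x. rnd s ^ row_exp x"] assms(3)
    by (simp add: sketch_fold_verts row_sketch_def)
  have col: "col_fp ?s' j mod p = col_sketch (rnd s) U j mod p"
    using foldl_add_mod[of "\<lambda>x. x mod b" "\<lambda>x. rnd s ^ col_exp x"] assms(4)
    by (simp add: sketch_fold_verts col_sketch_def)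
  have "flushed_sets_fp ?s' (i, j) = (sets_fp ?s' (i, j) + row_fp ?s' i * col_fp ?s' j) mod p"
    using assms(1,2) by (simp add: flushed_sets_fp_def)
  also have "\<dots> = (sets_fp s (i, j) + row_sketch (rnd s) U i * col_sketch (rnd s) U j) mod p"
    by (rule mod_add_cong[OF _ mod_mult_cong[OF row col]]) (simp add: sketch_fold_verts)
  finally show ?thesis .
qed

lemma edge_fp_sketch_fold_sets_stream: "edge_fp (sketch_fold (sets_stream Us) s) = edge_fp s"
  by (induction Us arbitrary: s rule: sets_stream.induct)
    (simp_all add: sketch_fold_verts sketch_step_def)

lemma flushed_sets_fp_sketch_fold_sets_stream:
  assumes "\<forall>i<b. row_fp s i = 0 \<and> col_fp s i = 0" and "i < b" "j < b"
  shows "flushed_sets_fp (sketch_fold (sets_stream Us) s) (i, j)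
      = (sets_fp s (i, j) + sets_sketch (rnd s) Us (i, j)) mod p"
  using assms(1)
proof (induction Us arbitrary: s rule: sets_stream.induct)
  case 1
  then show ?case
    using assms(2,3) by (simp add: flushed_sets_fp_def sets_sketch_def)
next
  case (2 U)
  then show ?case
    using assms(2,3) flushed_sets_fp_verts[of i j s U] by (simp add: sets_sketch_def)
next
  case (3 U V Us)
  define s' where "s' = sketch_step Delim (sketch_fold (map Vert U) s)"
  have s': "\<forall>i<b. row_fp s' i = 0 \<and> col_fp s' i = 0" "rnd s' = rnd s"
    "sets_fp s' (i, j) = (sets_fp s (i, j) + row_sketch (rnd s) U i * col_sketch (rnd s) U j) mod p"
    using "3.prems" assms(2,3) flushed_sets_fp_verts[of i j s U]
    by (simp_all add: s'_def sketch_step_def rnd_sketch_fold)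
  have fold_eq: "sketch_fold (sets_stream (U # V # Us)) s = sketch_fold (sets_stream (V # Us)) s'"
    by (simp add: s'_def)
  have "flushed_sets_fp (sketch_fold (sets_stream (U # V # Us)) s) (i, j)
      = ((sets_fp s (i, j) + row_sketch (rnd s) U i * col_sketch (rnd s) U j) mod p
         + sets_sketch (rnd s) (V # Us) (i, j)) mod p"
    unfolding fold_eq "3.IH"[OF s'(1)] s'(2,3) ..
  also have "\<dots> = (sets_fp s (i, j) + sets_sketch (rnd s) (U # V # Us) (i, j)) mod p"
    by (simp only: sets_sketch_Cons mod_add_left_eq add.assoc)
  finally show ?case .
qed

lemma check_iec_stream:
  "check (sketch_fold (iec_stream es Us) (initial_sketch r)) = poly (fingerprint es Us) r mod p"
proof -
  define s where "s = sketch_fold (map (\<lambda>(u, w). Edge u w) es) (initial_sketch r)"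
  have s: "\<forall>i<b. row_fp s i = 0 \<and> col_fp s i = 0" "rnd s = r" "sets_fp s (i, j) = 0"
    "edge_fp s (i, j) mod p = edge_sketch r es (i, j) mod p" if "i < b" "j < b" for i j
    using that edge_fp_sketch_fold_edges[of es "initial_sketch r" i j]
    by (simp_all add: s_def sketch_fold_edges initial_sketch_def)
  have "check (sketch_fold (iec_stream es Us) (initial_sketch r))
      = (\<Sum>i<b. \<Sum>j<b.
           edge_fp s (i, j) * flushed_sets_fp (sketch_fold (sets_stream Us) s) (i, j)) mod p"
    unfolding check_def iec_stream_def sketch_fold_append s_def[symmetric]
    by (simp add: edge_fp_sketch_fold_sets_stream)
  also have "\<dots> = (\<Sum>i<b. \<Sum>j<b. edge_sketch r es (i, j) * sets_sketch r Us (i, j)) mod p"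
    using s by (intro sum_mod_cong mod_mult_cong)
      (simp_all add: flushed_sets_fp_sketch_fold_sets_stream)
  finally show ?thesis
    by (simp add: poly_fingerprint)
qed

lemma help_fold_snoc: "help_fold r (H @ [c]) = help_step r c (help_fold r H)"
  by (simp add: help_fold_def)

lemma help_fold_eq:
  "help_fold r H = (min (length H) (Suc L),
     (\<Sum>m<min (length H) L. if H ! m then 2 ^ (m mod W) * r ^ (m div W) else 0) mod p,
     (\<Sum>m<min (length H) L. if H ! m \<and> m div W = target then 2 ^ (m mod W) else 0) mod 2 ^ W)"
proof (induction H rule: rev_induct)
  case Nil
  then show ?case
    by (simp add: help_fold_def)
next
  case (snoc c H)
  have prefix: "(\<Sum>m<k. if (H @ [c']) ! m \<and> P m then f m else 0)
      = (\<Sum>m<k. if H ! m \<and> P m then f m else (0::nat))" if "k \<le> length H" for k c' P f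
    using that by (intro sum.cong) (auto simp: nth_append)
  show ?case
  proof (cases "length H < L")
    case True
    then show ?thesis
      unfolding help_fold_snoc snoc.IH
      using prefix[OF order_refl, of _ "\<lambda>_. True", simplified]
      by (auto simp: help_step_def mod_add_left_eq prefix[OF order_refl])
  next
    case False
    then show ?thesis
      unfolding help_fold_snoc snoc.IH
      using prefix[of L, of _ "\<lambda>_. True", simplified] prefix[of L]
      by (auto simp: help_step_def)
  qed
qed

lemma help_fold_length_L:
  assumes "length H = L"
  shows "help_fold r H = (L, (\<Sum>k<D. chunk H k * r ^ k) mod p, chunk H target)"
proof -
  have split: "(k * W + j) div W = k" "(k * W + j) mod W = j" if "j < W" for k j
    using that by simp_all
  have "(\<Sum>m<L. if H ! m then 2 ^ (m mod W) * r ^ (m div W) else 0) = (\<Sum>k<D. chunk H k * r ^ k)"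
    unfolding L_def sum_lessThan_mult chunk_def
    by (simp add: split sum_distrib_right if_distrib[of "\<lambda>x. x * _"] cong: if_cong)
  moreover have "(\<Sum>m<L. if H ! m \<and> m div W = target then 2 ^ (m mod W) else 0)
      = (\<Sum>k<D. \<Sum>j<W. if H ! (k * W + j) \<and> k = target then 2 ^ j else (0::nat))"
    unfolding L_def sum_lessThan_mult by (intro sum.cong refl) (auto simp: split)
  moreover have "\<dots> = (\<Sum>k<D. if k = target then chunk H k else 0)"
    unfolding chunk_def by (intro sum.cong refl) auto
  moreover have "chunk H target < 2 ^ W"
    unfolding chunk_def by (rule sum_bits_less)
  ultimately show ?thesis
    using assms target_less_D by (simp add: help_fold_eq)
qed

lemma length_help_bits [simp]: "length (help_bits c) = L"
  by (simp add: help_bits_def)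

lemma chunk_help_bits:
  assumes "k < D" "c k < 2 ^ W"
  shows "chunk (help_bits c) k = c k"
proof -
  have "k * W + j < L" if "j < W" for j
    using assms(1) that mult_le_mono1[of "Suc k" D W] by (simp add: L_def)
  then have "chunk (help_bits c) k = (\<Sum>j<W. if bit (c k) j then 2 ^ j else 0)"
    unfolding chunk_def help_bits_def by (intro sum.cong) auto
  then show ?thesis
    using assms(2) by (simp add: sum_bits_eq_mod)
qed

lemma outcome_honest_help:
  assumes es: "valid_edges n es" and Us: "valid_sets n Us"
    and coeff_less: "\<And>k. coeff (fingerprint es Us) k < 2 ^ W" and value_less: "iec_value es Us < p"
  shows "outcome r (iec_stream es Us) (help_bits (coeff (fingerprint es Us)))
    = Some (iec_value es Us)"
proof -
  let ?F = "fingerprint es Us"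
  have "help_fold r (help_bits (coeff ?F)) = (L, poly ?F r mod p, iec_value es Us)"
    using coeff_fingerprint_target[OF es Us] chunk_help_bits[OF target_less_D coeff_less]
    by (simp add: help_fold_length_L chunk_help_bits coeff_less poly_fingerprint_eq_sum[OF es Us])
  then show ?thesis
    using value_less by (simp add: outcome_def verdict_def check_iec_stream)
qed

lemma outcome_length_L:
  assumes "length H = L"
  shows "outcome r (iec_stream es Us) H = (if (\<Sum>k<D. chunk H k * r ^ k) mod p
    = poly (fingerprint es Us) r mod p then Some (chunk H target mod p) else None)"
  using assms by (simp add: outcome_def verdict_def help_fold_length_L check_iec_stream)

lemma card_wrong_outcomes:
  assumes es: "valid_edges n es" and Us: "valid_sets n Us" and value_less: "iec_value es Us < p"
  shows "card {r \<in> {..<p}. outcome r (iec_stream es Us) H \<notin> {Some (iec_value es Us), None}}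
    \<le> D - 1"
    (is "card ?wrong \<le> _")
proof (cases "length H = L \<and> chunk H target mod p \<noteq> iec_value es Us")
  case False
  have "outcome r (iec_stream es Us) H \<in> {Some (iec_value es Us), None}" for r
  proof (cases "length H = L")
    case True
    then show ?thesis
      using False by (simp add: outcome_length_L)
  next
    case False
    then show ?thesis
      by (auto simp: outcome_def verdict_def help_fold_eq min_def)
  qed
  then show ?thesis
    by simp
next
  case True
  let ?F = "fingerprint es Us"
  let ?agree = "{r \<in> {..<p}. (\<Sum>k<D. chunk H k * r ^ k) mod p = (\<Sum>k<D. coeff ?F k * r ^ k) mod p}"
  have "?wrong \<subseteq> ?agree"
    using True by (auto simp: outcome_length_L poly_fingerprint_eq_sum[OF es Us] split: if_splits)
  then have "card ?wrong \<le> card ?agree"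
    by (intro card_mono) auto
  also have "\<dots> \<le> D - 1"
    using True value_less
    by (intro card_agreements_mod_prime[OF prime_p target_less_D])
      (simp add: coeff_fingerprint_target[OF es Us])
  finally show ?thesis .
qed

lemma memory_bits_le:
  assumes "real (b * b) \<le> v" "1 \<le> v"
  shows "real memory_bits \<le> 8 * v * real W"
proof -
  have "real b \<le> real b * real b"
    using b_pos by (simp add: mult_le_cancel_left1)
  then have "real (4 + 2 * b + 2 * (b * b)) \<le> 8 * v"
    using assms by simp
  then show ?thesis
    unfolding memory_bits_def of_nat_mult by (simp add: mult_left_mono mult.commute)
qed

definition sketch_states :: "sketch set" where
  "sketch_states = {s. rnd s < p \<and> edge_fp s \<in> {..<b} \<times> {..<b} \<rightarrow>\<^sub>E {..<p}
     \<and> row_fp s \<in> {..<b} \<rightarrow>\<^sub>E {..<p} \<and> col_fp s \<in> {..<b} \<rightarrow>\<^sub>E {..<p}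
     \<and> sets_fp s \<in> {..<b} \<times> {..<b} \<rightarrow>\<^sub>E {..<p}}"

definition help_states :: "(nat \<times> nat \<times> nat) set" where
  "help_states = {..Suc L} \<times> {..<p} \<times> {..<2 ^ W}"

lemma add_mod_PiE: "f \<in> A \<rightarrow>\<^sub>E {..<p} \<Longrightarrow> k \<in> A \<Longrightarrow> add_mod f k c \<in> A \<rightarrow>\<^sub>E {..<p}"
  using PiE_fun_upd[of "(f k + c) mod p" "\<lambda>_. {..<p}" k f A] p_pos
  by (simp add: add_mod_def insert_absorb)

lemma sketch_step_closed: "s \<in> sketch_states \<Longrightarrow> sketch_step t s \<in> sketch_states"
  using b_pos p_pos
  by (cases t) (auto simp: sketch_states_def sketch_step_def add_mod_PiE flushed_sets_fp_def
      restrict_PiE_iff)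

lemma help_step_closed: "h \<in> help_states \<Longrightarrow> help_step r c h \<in> help_states"
  using p_pos by (auto simp: help_states_def help_step_def)

lemma initial_sketch_in_states: "r < p \<Longrightarrow> initial_sketch r \<in> sketch_states"
  using p_pos by (simp add: sketch_states_def initial_sketch_def restrict_PiE_iff)

lemma card_sketch_states:
  "finite sketch_states \<and> card sketch_states \<le> p ^ (1 + 2 * b + 2 * (b * b))"
proof -
  let ?P = "{..<p} \<times> ({..<b} \<times> {..<b} \<rightarrow>\<^sub>E {..<p}) \<times> ({..<b} \<rightarrow>\<^sub>E {..<p})
    \<times> ({..<b} \<rightarrow>\<^sub>E {..<p}) \<times> ({..<b} \<times> {..<b} \<rightarrow>\<^sub>E {..<p})"
  let ?fields = "\<lambda>s. (rnd s, edge_fp s, row_fp s, col_fp s, sets_fp s)"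
  have inj: "inj_on ?fields sketch_states"
    by (intro inj_onI) (simp add: sketch.equality)
  have sub: "?fields ` sketch_states \<subseteq> ?P"
    by (auto simp: sketch_states_def)
  have fin: "finite ?P"
    by (intro finite_cartesian_product finite_PiE) auto
  have "card ?P = p ^ (1 + 2 * b + 2 * (b * b))"
    by (simp add: card_cartesian_product card_PiE power_add mult_2 flip: power_mult)
  then show ?thesis
    using card_inj_on_le[OF inj sub fin] finite_imageD[OF finite_subset[OF sub fin] inj] by simp
qed

lemma card_states:
  assumes "p \<le> 2 ^ W" "L + 2 \<le> 2 ^ W"
  shows "finite (sketch_states \<times> help_states)"
    and "card (sketch_states \<times> help_states) \<le> 2 ^ memory_bits"
proof -
  have "card help_states = (L + 2) * (p * 2 ^ W)"
    by (simp add: help_states_def card_cartesian_product)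
  also have "\<dots> \<le> 2 ^ W * (2 ^ W * 2 ^ W)"
    using assms by (intro mult_le_mono) auto
  finally have help_states: "finite help_states" "card help_states \<le> 2 ^ W * (2 ^ W * 2 ^ W)"
    by (simp_all add: help_states_def)
  then show "finite (sketch_states \<times> help_states)"
    using card_sketch_states by simp
  have "card (sketch_states \<times> help_states)
      \<le> p ^ (1 + 2 * b + 2 * (b * b)) * (2 ^ W * (2 ^ W * 2 ^ W))"
    using card_sketch_states help_states by (simp add: card_cartesian_product mult_le_mono)
  also have "\<dots> \<le> (2 ^ W) ^ (1 + 2 * b + 2 * (b * b)) * (2 ^ W * (2 ^ W * 2 ^ W))"
    using assms(1) by (intro mult_le_mono1 power_mono) auto
  also have "\<dots> = (2 ^ W) ^ (4 + 2 * b + 2 * (b * b))"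
    by (simp add: power_add eval_nat_numeral mult_ac)
  also have "\<dots> = 2 ^ memory_bits"
    by (simp add: memory_bits_def power_mult)
  finally show "card (sketch_states \<times> help_states) \<le> 2 ^ memory_bits" .
qed

lemma verifier_exists:
  assumes "p \<le> 2 ^ W" "L + 2 \<le> 2 ^ W"
  obtains V where "space_bounded V (real memory_bits)"
    and "\<And>\<sigma> H. v_result V \<sigma> H = map_pmf (\<lambda>r. outcome r \<sigma> H) (pmf_of_set {..<p})"
proof -
  let ?init = "map_pmf (\<lambda>r. (initial_sketch r, (0, 0, 0))) (pmf_of_set {..<p})"
  let ?step = "\<lambda>t (s, h). (sketch_step t s, h)"
  let ?help_step = "\<lambda>c (s, h). (s, help_step (rnd s) c h)"
  have "set_pmf (pmf_of_set {..<p}) = {..<p}"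
    using p_pos by (intro set_pmf_of_set) auto
  moreover have "(0, 0, 0) \<in> help_states"
    using p_pos by (simp add: help_states_def)
  ultimately have init: "set_pmf ?init \<subseteq> sketch_states \<times> help_states"
    using initial_sketch_in_states by auto
  have pair_step_closed: "?step t x \<in> sketch_states \<times> help_states"
    if "x \<in> sketch_states \<times> help_states" for t x
    using that sketch_step_closed by (auto split: prod.split)
  have pair_help_step_closed: "?help_step c x \<in> sketch_states \<times> help_states"
    if "x \<in> sketch_states \<times> help_states" for c x
    using that help_step_closed by (auto split: prod.split)
  obtain V where V: "space_bounded V (real memory_bits)"
    "\<And>\<sigma> H. v_result V \<sigma> H = map_pmf (\<lambda>x. case_prod verdict
       (foldl (\<lambda>x c. ?help_step c x) (foldl (\<lambda>x t. ?step t x) x \<sigma>) H)) ?init"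
    using finite_state_verifier[where step = ?step and help_step = ?help_step
        and out = "case_prod verdict",
        OF card_states[OF assms] init pair_step_closed pair_help_step_closed]
    by blast
  have stream_pair: "foldl (\<lambda>x t. ?step t x) (s, h) \<sigma> = (sketch_fold \<sigma> s, h)" for s h \<sigma>
    by (induction \<sigma> arbitrary: s) simp_all
  have help_pair:
    "foldl (\<lambda>x c. ?help_step c x) (s, h) H = (s, foldl (\<lambda>h c. help_step (rnd s) c h) h H)"
    for s h H
    by (induction H arbitrary: h) simp_all
  have "v_result V \<sigma> H = map_pmf (\<lambda>r. outcome r \<sigma> H) (pmf_of_set {..<p})" for \<sigma> H
    unfolding V(2)
    by (simp add: map_pmf_comp stream_pair help_pair outcome_def help_fold_def rnd_sketch_fold)
  with V(1) show ?thesis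
    using that by blast
qed

lemma iec_scheme_exists:
  assumes p_le: "p \<le> 2 ^ W" and L_le: "L + 2 \<le> 2 ^ W"
    and N: "N * n ^ 4 < p" and D_le: "3 * D \<le> p"
  shows "\<exists>V P. iec_scheme n N (real L) (real memory_bits) V P"
proof -
  obtain V where space: "space_bounded V (real memory_bits)"
    and result: "\<And>\<sigma> H. v_result V \<sigma> H = map_pmf (\<lambda>r. outcome r \<sigma> H) (pmf_of_set {..<p})"
    using verifier_exists[OF p_le L_le] by blast
  define P where "P \<sigma> = help_bits (coeff (fingerprint (stream_edges \<sigma>) (stream_sets \<sigma>)))" for \<sigma>
  have p_lessThan: "finite {..<p}" "{..<p} \<noteq> {}"
    using p_pos by auto
  have "iec_scheme n N (real L) (real memory_bits) V P"
    unfolding iec_scheme_def Let_def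
  proof (intro conjI allI impI space)
    fix es Us
    assume es: "valid_edges n es" and Us: "valid_sets n Us" and len: "length Us \<le> N"
    let ?\<sigma> = "iec_stream es Us" and ?f = "iec_value es Us"
    have P: "P ?\<sigma> = help_bits (coeff (fingerprint es Us))"
      by (simp add: P_def fingerprint_stream_decoded)
    have coeff_less: "coeff (fingerprint es Us) k < p" for k
      using coeff_fingerprint_le[OF es Us, of k] mult_le_mono1[OF len, of "n ^ 4"] N by linarith
    have f_less: "?f < p"
      using coeff_less[of target] by (simp add: coeff_fingerprint_target[OF es Us])
    show "real (length (P ?\<sigma>)) \<le> real L"
      by (simp add: P)
    show "measure_pmf.prob (v_result V ?\<sigma> (P ?\<sigma>)) {Some ?f} = 1"
      using outcome_honest_help[OF es Us order.strict_trans2[OF coeff_less p_le] f_less] p_pos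
      unfolding result prob_map_pmf_of_set[OF p_lessThan] by (simp add: P)
    fix H
    have "measure_pmf.prob (v_result V ?\<sigma> H) {r. r \<noteq> Some ?f \<and> r \<noteq> None}
        = card {r \<in> {..<p}. outcome r ?\<sigma> H \<notin> {Some ?f, None}} / p"
      unfolding result prob_map_pmf_of_set[OF p_lessThan] by simp
    also have "\<dots> \<le> (D - 1) / p"
      using card_wrong_outcomes[OF es Us f_less, of H] by (simp add: divide_right_mono)
    also have "\<dots> \<le> 1 / 3"
      using D_le p_pos by (simp add: field_simps)
    finally show "measure_pmf.prob (v_result V ?\<sigma> H) {r. r \<noteq> Some ?f \<and> r \<noteq> None} \<le> 1 / 3" .
  qed
  then show ?thesis
    by blast
qed

end

section \<open>Choice of the parameters\<close>

lemma floor_sqrt_bounds: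
  fixes v :: real
  assumes v: "1 \<le> v"
  defines "b \<equiv> nat \<lfloor>sqrt v\<rfloor>"
  shows "0 < b" and "real (b * b) \<le> v" and "v \<le> 4 * real (b * b)"
proof -
  have sqrt_v: "1 \<le> sqrt v"
    using v by simp
  have b: "real b \<le> sqrt v" "sqrt v < real b + 1"
    using sqrt_v by (simp_all add: b_def)
  then show b_pos: "0 < b"
    using sqrt_v by linarith
  have "real b * real b \<le> sqrt v * sqrt v"
    using b(1) v by (intro mult_mono) auto
  then show "real (b * b) \<le> v"
    using v by simp
  have "sqrt v \<le> 2 * real b"
    using b(2) b_pos by linarith
  then have "sqrt v * sqrt v \<le> (2 * real b) * (2 * real b)"
    using sqrt_v by (intro mult_mono) auto
  then show "v \<le> 4 * real (b * b)"
    using v by simp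
qed

lemma sqrt_split_bounds:
  fixes n :: nat and h v :: real
  assumes h: "1 \<le> h" and v: "1 \<le> v" and hv: "h * v = (real n) ^ 2"
  defines "b \<equiv> nat \<lfloor>sqrt v\<rfloor>"
  shows "real (4 * (n div b + 1) * (n div b + 1)) \<le> 40 * h"
proof -
  note b = floor_sqrt_bounds[OF v, folded b_def]
  have "h * v / (real b) ^ 2 \<le> h * (4 * (real b) ^ 2) / (real b) ^ 2"
    using b(3) h by (intro divide_right_mono mult_left_mono) (auto simp: power2_eq_square)
  then have quotient: "(real n / real b) ^ 2 \<le> 4 * h"
    using b(1) by (simp add: power_divide flip: hv)
  have "real (n div b + 1) \<le> real n / real b + 1"
    using of_nat_div_le_of_nat[of n b] by simp
  then have "real (n div b + 1) ^ 2 \<le> (real n / real b + 1) ^ 2"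
    by (intro power_mono) auto
  also have "\<dots> \<le> 2 * (real n / real b) ^ 2 + 2"
    using sum_squares_bound[of "real n / real b" 1] by (simp add: power2_sum)
  finally have "real (n div b + 1) ^ 2 \<le> 2 * (real n / real b) ^ 2 + 2" .
  moreover have "real (4 * (n div b + 1) * (n div b + 1)) = 4 * real (n div b + 1) ^ 2"
    by (simp only: of_nat_mult power2_eq_square)
  ultimately show ?thesis
    using quotient h by linarith
qed

lemma log_word_length:
  fixes n :: nat
  assumes n: "2 \<le> n"
  defines "t \<equiv> nat \<lceil>log 2 (real n)\<rceil> + 1"
  shows "n < 2 ^ t" and "2 \<le> t" and "real t \<le> 3 * log 2 (real n)"
proof -
  have log_n: "1 \<le> log 2 (real n)"
    using n by simp
  have "real n = 2 powr log 2 (real n)"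
    using n by simp
  also have "\<dots> \<le> 2 powr (nat \<lceil>log 2 (real n)\<rceil>)"
    using log_n by (intro powr_mono) linarith+
  finally have "n \<le> 2 ^ nat \<lceil>log 2 (real n)\<rceil>"
    by (simp add: powr_realpow flip: of_nat_le_iff)
  then have "n < 2 * 2 ^ nat \<lceil>log 2 (real n)\<rceil>"
    using n by linarith
  then show "n < 2 ^ t"
    by (simp add: t_def)
  have "1 \<le> \<lceil>log 2 (real n)\<rceil>"
    using log_n by linarith
  then show "2 \<le> t"
    by (simp add: t_def le_nat_iff)
  show "real t \<le> 3 * log 2 (real n)"
    using log_n by (simp add: t_def) linarith
qed

lemma word_size_bounds:
  fixes n t d :: nat
  assumes n: "n < 2 ^ t" and t: "2 \<le> t"
  defines "W \<equiv> (2 * d + 20) * t"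
  shows "2 * n ^ (2 * d + 16) \<le> 2 ^ W" and "16 * (n * n) * W + 2 \<le> 2 ^ W"
proof -
  have "2 * n ^ (2 * d + 16) \<le> 2 * (2 ^ t) ^ (2 * d + 16)"
    using n by (simp add: power_mono)
  also have "\<dots> = 2 ^ (t * (2 * d + 16) + 1)"
    by (simp add: power_mult power_add)
  also have "\<dots> \<le> 2 ^ W"
    using t by (intro power_increasing) (auto simp: W_def algebra_simps)
  finally show "2 * n ^ (2 * d + 16) \<le> 2 ^ W" .
  define y where "y = (2 * d + 15) * t"
  have "16 * (n * n) \<le> 16 * (2 ^ t * 2 ^ t)"
    using n by (intro mult_le_mono) auto
  also have "\<dots> = 2 ^ (t + t + 4)"
    by (simp only: power_add) simp
  finally have "16 * (n * n) \<le> 2 ^ (t + t + 4)" .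
  moreover have "W \<le> 2 * y"
    by (simp add: W_def y_def algebra_simps)
  then have "W \<le> 2 ^ y"
    using double_le_power_two[of y] by linarith
  ultimately have "16 * (n * n) * W \<le> 2 ^ (t + t + 4 + y)"
    unfolding power_add[of 2 "t + t + 4"] by (rule mult_le_mono)
  moreover have "(2::nat) \<le> 2 ^ (t + t + 4 + y)"
    using power_increasing[of 1 "t + t + 4 + y" "2::nat"] by simp
  ultimately have "16 * (n * n) * W + 2 \<le> 2 * 2 ^ (t + t + 4 + y)"
    by linarith
  also have "\<dots> = 2 ^ Suc (t + t + 4 + y)"
    by (rule power_Suc[symmetric])
  also have "\<dots> \<le> 2 ^ W"
    using t by (intro power_increasing) (auto simp: W_def y_def algebra_simps)
  finally show "16 * (n * n) * W + 2 \<le> 2 ^ W" .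
qed

lemma exists_prime_between_powers:
  fixes n d W :: nat
  assumes n: "2 \<le> n" and W: "2 * n ^ (2 * d + 16) \<le> 2 ^ W"
  obtains p where "prime p" "n ^ (d + 8) < p" "p \<le> 2 ^ W"
proof -
  have "(7::nat) \<le> 2 ^ (d + 8)"
    using power_increasing[of 3 "d + 8" "2::nat"] by simp
  also have "\<dots> \<le> n ^ (d + 8)"
    using n by (simp add: power_mono)
  finally obtain p where "prime p" "n ^ (d + 8) < p" "p \<le> 2 * (n ^ (d + 8)) ^ 2"
    using exists_prime_between_square by blast
  moreover have "(n ^ (d + 8)) ^ 2 = n ^ (2 * d + 16)"
    by (simp add: algebra_simps flip: power_mult)
  ultimately show ?thesis
    using that W by simp
qed

lemma powers_le_power_plus_eight:
  fixes n d :: nat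
  assumes "2 \<le> n"
  shows "n ^ d * n ^ 4 \<le> n ^ (d + 8)" and "48 * (n * n) \<le> n ^ (d + 8)"
proof -
  show "n ^ d * n ^ 4 \<le> n ^ (d + 8)"
    using assms by (simp add: power_increasing flip: power_add)
  have "48 * (n * n) \<le> 2 ^ 6 * n ^ 2"
    by (simp add: power2_eq_square)
  also have "\<dots> \<le> n ^ 6 * n ^ 2"
    using assms by (intro mult_le_mono power_mono) auto
  also have "\<dots> \<le> n ^ (d + 8)"
    using assms by (simp add: power_increasing flip: power_add)
  finally show "48 * (n * n) \<le> n ^ (d + 8)" .
qed

lemma iec_scheme_tradeoff:
  fixes n d :: nat and h v :: real
  assumes n: "2 \<le> n" and h: "1 \<le> h" and v: "1 \<le> v" and hv: "h * v = (real n) ^ 2"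
  shows "\<exists>V P. iec_scheme n (n ^ d) (120 * (2 * real d + 20) * h * log 2 n)
    (120 * (2 * real d + 20) * v * log 2 n) V P"
proof -
  define b where "b = nat \<lfloor>sqrt v\<rfloor>"
  define t where "t = nat \<lceil>log 2 (real n)\<rceil> + 1"
  define W where "W = (2 * d + 20) * t"
  have t: "n < 2 ^ t" "2 \<le> t" "real t \<le> 3 * log 2 (real n)"
    using log_word_length[OF n] unfolding t_def by auto
  have W: "2 * n ^ (2 * d + 16) \<le> 2 ^ W" "16 * (n * n) * W + 2 \<le> 2 ^ W"
    using word_size_bounds[OF t(1,2)] unfolding W_def by auto
  obtain p where p: "prime p" "n ^ (d + 8) < p" "p \<le> 2 ^ W"
    using exists_prime_between_powers[OF n W(1)] .
  interpret protocol: iec_protocol n b p W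
    using floor_sqrt_bounds[OF v] t p by unfold_locales (auto simp: W_def b_def)
  have D: "protocol.D \<le> 16 * (n * n)"
    using n by (intro protocol.D_le) simp
  have "protocol.L + 2 \<le> 2 ^ W"
    using W(2) mult_le_mono1[OF D, of W] unfolding protocol.L_def by linarith
  moreover have "n ^ d * n ^ 4 < p" "3 * protocol.D \<le> p"
    using powers_le_power_plus_eight[OF n, of d] p(2) D by linarith+
  ultimately obtain V P
    where scheme: "iec_scheme n (n ^ d) (real protocol.L) (real protocol.memory_bits) V P"
    using protocol.iec_scheme_exists p(3) by blast
  have W_le: "real W \<le> (2 * real d + 20) * (3 * log 2 (real n))"
    using t(3) by (simp add: W_def mult_left_mono)
  have "real protocol.L \<le> 40 * h * real W"
    using sqrt_split_bounds[OF h v hv, folded b_def]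
    unfolding protocol.L_def protocol.D_def protocol.a_def of_nat_mult
    by (intro mult_right_mono) auto
  also have "\<dots> \<le> 40 * h * ((2 * real d + 20) * (3 * log 2 (real n)))"
    using W_le h by (intro mult_left_mono) auto
  finally have help_le: "real protocol.L \<le> 120 * (2 * real d + 20) * h * log 2 (real n)"
    by (simp add: algebra_simps)
  have "real protocol.memory_bits \<le> 8 * v * real W"
    using protocol.memory_bits_le floor_sqrt_bounds(2)[OF v, folded b_def] v by blast
  also have "\<dots> \<le> 8 * v * ((2 * real d + 20) * (3 * log 2 (real n)))"
    using W_le v by (intro mult_left_mono) auto
  also have "\<dots> \<le> 120 * (2 * real d + 20) * v * log 2 (real n)"
    using n v by (simp add: algebra_simps)
  finally have space_le:
    "real protocol.memory_bits \<le> 120 * (2 * real d + 20) * v * log 2 (real n)" .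
  show ?thesis
    using iec_scheme_mono[OF scheme help_le space_le] by blast
qed

theorem lemma3p1:
  shows "\<forall>d::nat. \<exists>(c::real) (k::nat). c > 0 \<and>
    (\<forall>n::nat. \<forall>h v :: real. n \<ge> 2 \<longrightarrow> h \<ge> 1 \<longrightarrow> v \<ge> 1 \<longrightarrow> h * v = (real n)^2 \<longrightarrow>
      (\<exists>V P. iec_scheme n (n ^ d) (c * h * (log 2 n) ^ k) (c * v * (log 2 n) ^ k) V P))"
proof -
  have "0 < 120 * (2 * real d + 20)" for d :: nat
    by simp
  then show ?thesis
    using iec_scheme_tradeoff by (metis power_one_right)
qed

end
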